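(* Let $r_o>0$, $\tau>0$, $\alpha>0$ and $\beta\in(0,1]$ be constants. For $m<0$, let $u_m:[0,\infty)\to[r_o,\infty)$ be the solution of $$u_m(0)=r_o,\qquad u_m'(s)=\left(1-\frac{2m}{u_m(s)}\right)^{1/2},$$ and set $k=\tau(1-2m/r_o)^{-1/2}$. For $m$ sufficiently negative (so that $\beta>(1+\alpha/2)k^2$), let $A_o(m)$ be the smallest positive root $A$ of $$\beta-k^2-\frac\alpha2A^{-2}u_m^2(Ak)=0.$$ Let $\theta>0$ be the unique positive root of $\theta^3-\frac{3\tau}{2}\left(\frac{\alpha}{2\beta}\right)^{1/2}\theta^2-1=0$. Then $$\lim_{m\to-\infty}A_o(m)=r_o\theta^2\left(\frac{\alpha}{2\beta}\right)^{1/2},\qquad \lim_{m\to-\infty}u_m(A_o(m)k)=r_o\theta^2.$$ *)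

theory Defs
  imports "HOL-Analysis.Analysis"
begin

definition is_u_sol :: "real \<Rightarrow> real \<Rightarrow> (real \<Rightarrow> real) \<Rightarrow> bool" where
  "is_u_sol r m u \<longleftrightarrow> u 0 = r \<and> (\<forall>s\<ge>0. u s \<ge> r) \<and>
     (\<forall>s\<ge>0. (u has_real_derivative sqrt (1 - 2 * m / u s)) (at s within {0..}))"

definition kk :: "real \<Rightarrow> real \<Rightarrow> real \<Rightarrow> real" where
  "kk \<tau> r m = \<tau> / sqrt (1 - 2 * m / r)"

definition F :: "real \<Rightarrow> real \<Rightarrow> real \<Rightarrow> (real \<Rightarrow> real) \<Rightarrow> real \<Rightarrow> real" where
  "F \<alpha> \<beta> k u A = \<beta> - k\<^sup>2 - \<alpha> / 2 * (1 / A\<^sup>2) * (u (A * k))\<^sup>2"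

definition A_o :: "real \<Rightarrow> real \<Rightarrow> real \<Rightarrow> (real \<Rightarrow> real) \<Rightarrow> real" where
  "A_o \<alpha> \<beta> k u = (THE A. A > 0 \<and> F \<alpha> \<beta> k u A = 0 \<and>
       (\<forall>B. 0 < B \<and> B < A \<longrightarrow> F \<alpha> \<beta> k u B \<noteq> 0))"

definition theta :: "real \<Rightarrow> real \<Rightarrow> real \<Rightarrow> real" where
  "theta \<tau> \<alpha> \<beta> = (THE \<theta>. \<theta> > 0 \<and>
       \<theta> ^ 3 - 3 * \<tau> / 2 * sqrt (\<alpha> / (2 * \<beta>)) * \<theta> ^ 2 - 1 = 0)"

end

theory Submission
  imports Defs "HOL-Real_Asymp.Real_Asymp"
begin

text \<open>Write P(x) = x^(3/2), encoded as x * sqrt x. Along a solution (P \<circ> u)' = (3/2) sqrt (u - 2m),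
  which lies between (3/2) sqrt (-2m) and (3/2) sqrt (u(s) - 2m) on [0, s]; integrating, and using the
  crude bound u(s) \<le> r + sqrt (1 - 2m/r) s in the upper estimate, gives bounds on P(u(s)) that are
  affine in s. Since sqrt (-2m) k \<rightarrow> \<tau> sqrt r, at the scale s = A k both bounds tend to
  P(r) + (3/2) \<tau> sqrt r A as m \<rightarrow> -\<infinity>, whereas a root A of F means u(A k) = sqrt (2(\<beta> - k^2)/\<alpha>) A,
  and this slope tends to d = sqrt (2\<beta>/\<alpha>). So A_o tends to the positive solution L of the chord
  equation P(d L) = P(r) + (3/2) \<tau> sqrt r L: by convexity of A \<mapsto> P(d A), for all sufficiently
  negative m the function F is negative on (0, L - \<delta>] and positive at L + \<delta>, which traps A_o.
  In terms of d L = r \<theta>^2 the chord equation is the cubic defining \<theta>.\<close>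

lemma DERIV_le_imp_le_on_ray:
  fixes f g f' g' :: "real \<Rightarrow> real"
  assumes f: "\<And>s. s \<ge> 0 \<Longrightarrow> (f has_real_derivative f' s) (at s within {0..})"
    and g: "\<And>s. s \<ge> 0 \<Longrightarrow> (g has_real_derivative g' s) (at s within {0..})"
    and deriv_le: "\<And>s. a < s \<Longrightarrow> s < b \<Longrightarrow> f' s \<le> g' s"
    and "f a \<le> g a" "0 \<le> a" "a \<le> b"
  shows "f b \<le> g b"
proof -
  have "(\<lambda>s. g s - f s) a \<le> (\<lambda>s. g s - f s) b"
  proof (rule DERIV_nonneg_imp_increasing_open[OF \<open>a \<le> b\<close>])
    fix x assume x: "a < x" "x < b"
    have "((\<lambda>s. g s - f s) has_real_derivative g' x - f' x) (at x within {0<..})"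
      by (rule DERIV_subset[OF DERIV_diff[OF g f]]) (use x \<open>0 \<le> a\<close> in auto)
    then have "((\<lambda>s. g s - f s) has_real_derivative g' x - f' x) (at x)"
      using at_within_open[of x "{0<..}"] x \<open>0 \<le> a\<close> by auto
    then show "\<exists>y. ((\<lambda>s. g s - f s) has_real_derivative y) (at x) \<and> 0 \<le> y"
      using deriv_le[OF x] by auto
  next
    have "continuous_on {0..} (\<lambda>s. g s - f s)"
      by (intro continuous_on_diff; rule DERIV_continuous_on) (use f g in auto)
    then show "continuous_on {a..b} (\<lambda>s. g s - f s)"
      by (rule continuous_on_subset) (use \<open>0 \<le> a\<close> in auto)
  qed
  then show ?thesis using \<open>f a \<le> g a\<close> by simp
qed

lemma pow32_less_imp_less:
  fixes x y :: real
  assumes "0 \<le> x" "0 \<le> y" "x * sqrt x < y * sqrt y"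
  shows "x < y"
proof (rule ccontr)
  assume "\<not> x < y"
  then have "y * sqrt y \<le> x * sqrt x" using assms by (intro mult_mono) auto
  then show False using assms by simp
qed

lemma pow32_scale:
  fixes d L A :: real
  assumes "0 < d" "0 < L"
  shows "(d * A) * sqrt (d * A) = ((d * L) * sqrt (d * L)) * (A / L) * sqrt (A / L)"
proof -
  have "sqrt (d * A) = sqrt (d * L) * sqrt (A / L)"
    using assms by (simp add: real_sqrt_mult[symmetric])
  then show ?thesis using assms by (simp add: field_simps)
qed

lemma pow32_scaled_le_affine:
  fixes d L a b A A1 :: real
  assumes "0 < d" "0 < L" "0 \<le> a" "0 \<le> b" "0 \<le> A" "A \<le> A1" "A1 \<le> L"
    and chord: "(d * L) * sqrt (d * L) = a + b * L"
  shows "(d * A) * sqrt (d * A) \<le> sqrt (A1 / L) * (a + b * A)"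
proof -
  have "(d * A) * sqrt (d * A) = (a + b * L) * (A / L) * sqrt (A / L)"
    using pow32_scale[OF assms(1,2)] chord by simp
  also have "\<dots> \<le> (a + b * L) * (A / L) * sqrt (A1 / L)"
    using assms by (intro mult_left_mono) (auto intro!: divide_right_mono)
  also have "(a + b * L) * (A / L) = a * (A / L) + b * A"
    using assms by (simp add: field_simps)
  also have "\<dots> \<le> a + b * A"
    using assms mult_left_mono[of A L a] by (simp add: divide_le_eq)
  finally show ?thesis
    using assms by (simp add: mult.commute mult_right_mono)
qed

lemma affine_less_pow32_scaled:
  fixes d L a b A :: real
  assumes "0 < d" "0 < L" "0 < a" "0 \<le> b" "L < A"
    and chord: "(d * L) * sqrt (d * L) = a + b * L"
  shows "a + b * A < (d * A) * sqrt (d * A)"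
proof -
  have pos: "0 < (a + b * L) * (A / L)"
    using assms by (intro mult_pos_pos add_pos_nonneg) auto
  have "a + b * A \<le> a * (A / L) + b * A"
    using assms mult_left_mono[of L A a] by (simp add: le_divide_eq)
  also have "\<dots> = (a + b * L) * (A / L)"
    using assms by (simp add: field_simps)
  also have "\<dots> < (a + b * L) * (A / L) * sqrt (A / L)"
    using mult_strict_left_mono[OF _ pos, of 1 "sqrt (A / L)"] assms by simp
  also have "\<dots> = (d * A) * sqrt (d * A)"
    using pow32_scale[OF assms(1,2)] chord by simp
  finally show ?thesis .
qed

lemma F_neg_if:
  assumes "0 < \<alpha>" "0 < \<beta>" "0 < A" "sqrt (2 * \<beta> / \<alpha>) * A < u (A * k)"
  shows "F \<alpha> \<beta> k u A < 0"
proof -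
  have "(sqrt (2 * \<beta> / \<alpha>) * A)\<^sup>2 < (u (A * k))\<^sup>2"
    using assms by (intro power_strict_mono) auto
  then have "2 * \<beta> / \<alpha> * A\<^sup>2 < (u (A * k))\<^sup>2"
    using assms by (simp add: power_mult_distrib)
  then have "\<beta> < \<alpha> / 2 * (1 / A\<^sup>2) * (u (A * k))\<^sup>2"
    using assms by (simp add: field_simps)
  then show ?thesis
    unfolding F_def using zero_le_power2[of k] by linarith
qed

lemma F_pos_if:
  assumes "0 < \<alpha>" "0 < A" "k\<^sup>2 < \<beta>" "0 \<le> u (A * k)"
    and "u (A * k) < sqrt (2 * (\<beta> - k\<^sup>2) / \<alpha>) * A"
  shows "0 < F \<alpha> \<beta> k u A"
proof -
  have "(u (A * k))\<^sup>2 < (sqrt (2 * (\<beta> - k\<^sup>2) / \<alpha>) * A)\<^sup>2"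
    using assms by (intro power_strict_mono) auto
  then have "(u (A * k))\<^sup>2 < 2 * (\<beta> - k\<^sup>2) / \<alpha> * A\<^sup>2"
    using assms by (simp add: power_mult_distrib)
  then have "\<alpha> / 2 * (1 / A\<^sup>2) * (u (A * k))\<^sup>2 < \<beta> - k\<^sup>2"
    using assms by (simp add: field_simps)
  then show ?thesis
    unfolding F_def by simp
qed

lemma F_root:
  assumes "0 < \<alpha>" "0 < A" "0 \<le> u (A * k)" "F \<alpha> \<beta> k u A = 0"
  shows "u (A * k) = sqrt (2 * (\<beta> - k\<^sup>2) / \<alpha>) * A"
proof -
  have "(u (A * k))\<^sup>2 = A\<^sup>2 * (2 * (\<beta> - k\<^sup>2) / \<alpha>)"
    using assms unfolding F_def by (simp add: field_simps)
  then have "sqrt ((u (A * k))\<^sup>2) = sqrt (A\<^sup>2) * sqrt (2 * (\<beta> - k\<^sup>2) / \<alpha>)"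
    by (metis real_sqrt_mult)
  then show ?thesis
    using assms by simp
qed

lemma continuous_on_F:
  assumes "continuous_on {0..} u" "0 < k"
  shows "continuous_on {0<..} (F \<alpha> \<beta> k u)"
proof -
  have "continuous_on {0<..} (\<lambda>A. u (A * k))"
    by (rule continuous_on_compose2[OF assms(1)]) (use assms(2) in \<open>auto intro!: continuous_intros\<close>)
  then show ?thesis
    unfolding F_def[abs_def] by (auto intro!: continuous_intros)
qed

definition least_pos_root :: "(real \<Rightarrow> real) \<Rightarrow> real" where
  "least_pos_root f = (THE A. A > 0 \<and> f A = 0 \<and> (\<forall>B. 0 < B \<and> B < A \<longrightarrow> f B \<noteq> 0))"

lemma A_o_eq_least_pos_root: "A_o \<alpha> \<beta> k u = least_pos_root (F \<alpha> \<beta> k u)"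
  unfolding A_o_def least_pos_root_def ..

lemma least_pos_rootI:
  assumes "0 < A" "f A = 0" "\<And>B. 0 < B \<Longrightarrow> B < A \<Longrightarrow> f B \<noteq> 0"
  shows "least_pos_root f = A"
  unfolding least_pos_root_def
proof (rule the_equality)
  fix A' assume A': "A' > 0 \<and> f A' = 0 \<and> (\<forall>B. 0 < B \<and> B < A' \<longrightarrow> f B \<noteq> 0)"
  show "A' = A"
    using A' assms by (cases A' A rule: linorder_cases) auto
qed (use assms in auto)

lemma least_pos_root_between:
  fixes f :: "real \<Rightarrow> real"
  assumes cont: "continuous_on {0<..} f"
    and neg: "\<And>A. 0 < A \<Longrightarrow> A \<le> A1 \<Longrightarrow> f A < 0" and pos: "0 < f A2"
    and "0 < A1" "A1 \<le> A2"
  shows "A1 < least_pos_root f \<and> least_pos_root f \<le> A2 \<and> f (least_pos_root f) = 0"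
proof -
  define Z where "Z = {A \<in> {A1..A2}. f A = 0}"
  have cont_A12: "continuous_on {A1..A2} f"
    by (rule continuous_on_subset[OF cont]) (use \<open>0 < A1\<close> in auto)
  have f_A1: "f A1 < 0" using neg \<open>0 < A1\<close> by simp
  have "\<exists>x\<ge>A1. x \<le> A2 \<and> f x = 0"
    using IVT'[of f A1 0 A2] f_A1 pos assms cont_A12 by auto
  then have "Z \<noteq> {}" unfolding Z_def by auto
  moreover have "closed Z"
    unfolding Z_def by (rule continuous_closed_preimage_constant[OF cont_A12]) simp
  moreover have Z_bdd: "bdd_below Z"
    unfolding Z_def by (auto intro: bdd_belowI[of _ A1])
  ultimately have "Inf Z \<in> Z"
    by (meson closed_contains_Inf)
  then have Inf: "A1 \<le> Inf Z" "Inf Z \<le> A2" "f (Inf Z) = 0"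
    unfolding Z_def by auto
  have "A1 < Inf Z"
    using Inf f_A1 by (cases "Inf Z = A1") auto
  moreover have "f B \<noteq> 0" if "0 < B" "B < Inf Z" for B
  proof
    assume "f B = 0"
    have "B \<le> A1"
    proof (rule ccontr)
      assume "\<not> B \<le> A1"
      with \<open>f B = 0\<close> that Inf have "B \<in> Z" unfolding Z_def by auto
      then show False using cInf_lower[OF _ Z_bdd] that by fastforce
    qed
    then show False using neg \<open>f B = 0\<close> that by force
  qed
  ultimately have "least_pos_root f = Inf Z"
    using \<open>0 < A1\<close> Inf by (intro least_pos_rootI) auto
  then show ?thesis using Inf \<open>A1 < Inf Z\<close> by simp
qed

lemma cubic_pos_root_unique:
  fixes K :: real
  assumes "0 \<le> K"
  shows "\<exists>!\<theta>. 0 < \<theta> \<and> \<theta> ^ 3 - K * \<theta>\<^sup>2 - 1 = 0"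
proof (rule ex_ex1I)
  have "\<exists>x\<ge>0. x \<le> K + 1 \<and> x ^ 3 - K * x\<^sup>2 - 1 = 0"
  proof (rule IVT')
    have "(K + 1) ^ 3 - K * (K + 1)\<^sup>2 - 1 = (K + 1)\<^sup>2 - 1"
      by (simp add: power2_eq_square power3_eq_cube algebra_simps)
    also have "\<dots> \<ge> 0"
      using assms by (simp add: power2_eq_square algebra_simps)
    finally show "0 \<le> (K + 1) ^ 3 - K * (K + 1)\<^sup>2 - 1" .
  qed (use assms in \<open>auto intro!: continuous_intros\<close>)
  then obtain x where x: "0 \<le> x" "x ^ 3 - K * x\<^sup>2 - 1 = 0" by auto
  then have "x \<noteq> 0" by auto
  with x show "\<exists>x. 0 < x \<and> x ^ 3 - K * x\<^sup>2 - 1 = 0" by (intro exI[of _ x]) auto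
next
  have root_eq: "x\<^sup>2 * (x - K) = 1" if "x ^ 3 - K * x\<^sup>2 - 1 = 0" for x :: real
    using that by (simp add: power2_eq_square power3_eq_cube algebra_simps)
  have no_larger_root: False
    if x: "0 < x" "x ^ 3 - K * x\<^sup>2 - 1 = 0" and y: "y ^ 3 - K * y\<^sup>2 - 1 = 0" and "x < y" for x y
  proof -
    have "0 < x - K"
      using root_eq[OF x(2)] x(1) by (smt (verit) mult_nonneg_nonpos zero_le_power2)
    moreover have "x\<^sup>2 < y\<^sup>2"
      using x(1) \<open>x < y\<close> by (intro power_strict_mono) auto
    ultimately have "x\<^sup>2 * (x - K) < y\<^sup>2 * (y - K)"
      using x(1) \<open>x < y\<close> by (intro mult_strict_mono) auto
    then show False using root_eq[OF x(2)] root_eq[OF y] by simp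
  qed
  fix x y
  assume "0 < x \<and> x ^ 3 - K * x\<^sup>2 - 1 = 0" "0 < y \<and> y ^ 3 - K * y\<^sup>2 - 1 = 0"
  then show "x = y"
    using no_larger_root[of x y] no_larger_root[of y x] by (cases x y rule: linorder_cases) auto
qed

lemma kk_eq:
  assumes "0 < r"
  shows "kk \<tau> r m = \<tau> * sqrt r / sqrt (r - 2 * m)"
proof -
  have "1 - 2 * m / r = (r - 2 * m) / r"
    using assms by (simp add: field_simps)
  then show ?thesis
    using assms unfolding kk_def by (simp add: real_sqrt_divide)
qed

lemma kk_tendsto_0: "0 < r \<Longrightarrow> ((\<lambda>m. kk \<tau> r m) \<longlongrightarrow> 0) at_bot"
  by (simp add: kk_eq) real_asymp

lemma sqrt_mult_kk_tendsto:
  assumes "0 < r"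
  shows "((\<lambda>m. sqrt (c - 2 * m) * kk \<tau> r m) \<longlongrightarrow> \<tau> * sqrt r) at_bot"
proof -
  have "((\<lambda>m::real. sqrt (c - 2 * m) / sqrt (r - 2 * m)) \<longlongrightarrow> 1) at_bot"
    by real_asymp
  from tendsto_mult_left[OF this, of "\<tau> * sqrt r"] show ?thesis
    using assms by (simp add: kk_eq mult.commute)
qed

lemma root_slope_tendsto:
  assumes "0 < r" "\<alpha> \<noteq> 0"
  shows "((\<lambda>m. sqrt (2 * (\<beta> - (kk \<tau> r m)\<^sup>2) / \<alpha>)) \<longlongrightarrow> sqrt (2 * \<beta> / \<alpha>)) at_bot"
proof -
  have "((\<lambda>m. sqrt (2 * (\<beta> - (kk \<tau> r m)\<^sup>2) / \<alpha>)) \<longlongrightarrow> sqrt (2 * (\<beta> - 0\<^sup>2) / \<alpha>)) at_bot"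
    using assms by (intro tendsto_intros kk_tendsto_0)
  then show ?thesis by simp
qed

locale u_solution =
  fixes r m :: real and u :: "real \<Rightarrow> real"
  assumes solution: "is_u_sol r m u" and m_neg: "m < 0" and r_pos: "0 < r"
begin

lemma u_0: "u 0 = r"
  and u_ge: "0 \<le> s \<Longrightarrow> r \<le> u s"
  and u_deriv: "0 \<le> s \<Longrightarrow> (u has_real_derivative sqrt (1 - 2 * m / u s)) (at s within {0..})"
  using solution unfolding is_u_sol_def by auto

lemma u_pos: "0 \<le> s \<Longrightarrow> 0 < u s"
  using u_ge r_pos by (meson less_le_trans)

lemma u_continuous: "continuous_on {0..} u"
  by (rule DERIV_continuous_on) (use u_deriv in auto)

lemma u_mono: "0 \<le> s \<Longrightarrow> s \<le> t \<Longrightarrow> u s \<le> u t"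
proof (rule DERIV_le_imp_le_on_ray[where f' = "\<lambda>_. 0", OF _ u_deriv])
  fix x assume "s < x"
  moreover assume "0 \<le> s"
  ultimately have "0 < u x" by (intro u_pos) auto
  then show "0 \<le> sqrt (1 - 2 * m / u x)"
    using m_neg by (simp add: divide_neg_pos less_imp_le)
qed auto

lemma u_pow32_deriv:
  assumes "0 \<le> s"
  shows "((\<lambda>s. u s * sqrt (u s)) has_real_derivative 3/2 * sqrt (u s - 2 * m)) (at s within {0..})"
proof -
  have pos: "0 < u s" using u_pos[OF assms] .
  have sqrt_u': "sqrt (1 - 2 * m / u s) * sqrt (u s) = sqrt (u s - 2 * m)"
    using pos by (simp add: real_sqrt_mult[symmetric] field_simps)
  have "((\<lambda>s. u s * sqrt (u s)) has_real_derivative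
      sqrt (1 - 2 * m / u s) * sqrt (u s)
      + u s * (inverse (sqrt (u s)) / 2 * sqrt (1 - 2 * m / u s))) (at s within {0..})"
    using DERIV_mult'[OF u_deriv[OF assms] DERIV_chain2[OF DERIV_real_sqrt[OF pos] u_deriv[OF assms]]]
    by (simp add: add.commute)
  moreover have "u s * (inverse (sqrt (u s)) / 2 * sqrt (1 - 2 * m / u s)) = sqrt (u s - 2 * m) / 2"
  proof -
    have "u s * inverse (sqrt (u s)) = sqrt (u s)"
      using pos by (metis real_div_sqrt divide_inverse less_imp_le)
    then show ?thesis using sqrt_u' by (metis mult.assoc mult.commute times_divide_eq_right)
  qed
  ultimately show ?thesis
    using sqrt_u' by (simp add: DERIV_cong)
qed

lemma u_pow32_lower:
  assumes "0 \<le> s"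
  shows "r * sqrt r + 3/2 * sqrt (-2 * m) * s \<le> u s * sqrt (u s)"
proof (rule DERIV_le_imp_le_on_ray[OF _ u_pow32_deriv,
    where f = "\<lambda>s. r * sqrt r + 3/2 * sqrt (-2 * m) * s"])
  show "((\<lambda>s. r * sqrt r + 3/2 * sqrt (-2 * m) * s) has_real_derivative 3/2 * sqrt (-2 * m))
      (at t within {0..})" for t
    by (auto intro!: derivative_eq_intros)
  show "3/2 * sqrt (-2 * m) \<le> 3/2 * sqrt (u t - 2 * m)" if "0 < t" for t
    using u_pos[of t] that by simp
qed (use assms u_0 in auto)

lemma u_pow32_upper:
  assumes "0 \<le> s"
  shows "u s * sqrt (u s) \<le> r * sqrt r + 3/2 * sqrt (u s - 2 * m) * s"
proof (rule DERIV_le_imp_le_on_ray[OF u_pow32_deriv,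
    where g = "\<lambda>t. r * sqrt r + 3/2 * sqrt (u s - 2 * m) * t"])
  show "((\<lambda>t. r * sqrt r + 3/2 * sqrt (u s - 2 * m) * t) has_real_derivative
      3/2 * sqrt (u s - 2 * m)) (at t within {0..})" for t
    by (auto intro!: derivative_eq_intros)
  show "3/2 * sqrt (u t - 2 * m) \<le> 3/2 * sqrt (u s - 2 * m)" if "0 < t" "t < s" for t
    using u_mono[of t s] that by simp
qed (use assms u_0 in auto)

lemma u_le_linear:
  assumes "0 \<le> s"
  shows "u s \<le> r + sqrt (1 - 2 * m / r) * s"
proof (rule DERIV_le_imp_le_on_ray[OF u_deriv, where g = "\<lambda>t. r + sqrt (1 - 2 * m / r) * t"])
  show "((\<lambda>t. r + sqrt (1 - 2 * m / r) * t) has_real_derivative sqrt (1 - 2 * m / r))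
      (at t within {0..})" for t
    by (auto intro!: derivative_eq_intros)
  show "sqrt (1 - 2 * m / u t) \<le> sqrt (1 - 2 * m / r)" if "0 < t" for t
  proof -
    have "- 2 * m / u t \<le> - 2 * m / r"
      by (rule divide_left_mono) (use m_neg r_pos u_ge[of t] that in auto)
    then show ?thesis by simp
  qed
qed (use assms u_0 in auto)

lemma scaled_lt_u:
  assumes "0 < A" "A \<le> A1" "A1 < L" "0 < d" "0 < k" "0 \<le> b"
    and chord: "(d * L) * sqrt (d * L) = r * sqrt r + b * L"
    and slope: "sqrt (A1 / L) * b < 3/2 * sqrt (-2 * m) * k"
  shows "d * A < u (A * k)"
proof -
  have "0 < L" using \<open>0 < A\<close> \<open>A \<le> A1\<close> \<open>A1 < L\<close> by linarith
  have "0 \<le> A * k" using \<open>0 < A\<close> \<open>0 < k\<close> by simp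
  have "(d * A) * sqrt (d * A) \<le> sqrt (A1 / L) * (r * sqrt r + b * A)"
    using r_pos \<open>0 < A\<close> \<open>A1 < L\<close>
    by (intro pow32_scaled_le_affine[OF \<open>0 < d\<close> \<open>0 < L\<close> _ \<open>0 \<le> b\<close> _ \<open>A \<le> A1\<close> _ chord]) auto
  also have "\<dots> < r * sqrt r + 3/2 * sqrt (-2 * m) * (A * k)"
  proof -
    have "sqrt (A1 / L) < 1"
      using \<open>0 < L\<close> \<open>A1 < L\<close> by simp
    then have "sqrt (A1 / L) * (r * sqrt r) < r * sqrt r"
      using r_pos by simp
    moreover have "sqrt (A1 / L) * b * A < 3/2 * sqrt (-2 * m) * k * A"
      using slope \<open>0 < A\<close> by simp
    ultimately show ?thesis by (simp add: algebra_simps)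
  qed
  also have "\<dots> \<le> u (A * k) * sqrt (u (A * k))"
    using u_pow32_lower[OF \<open>0 \<le> A * k\<close>] .
  finally show ?thesis
    by (rule pow32_less_imp_less[rotated 2]) (use \<open>0 < d\<close> \<open>0 < A\<close> u_pos[OF \<open>0 \<le> A * k\<close>] in auto)
qed

lemma u_lt_scaled:
  assumes "0 < \<tau>" "0 \<le> A" "0 \<le> D"
    and upper: "r * sqrt r + 3/2 * sqrt (r + \<tau> * A - 2 * m) * kk \<tau> r m * A < (D * A) * sqrt (D * A)"
  shows "u (A * kk \<tau> r m) < D * A"
proof -
  define s where "s = A * kk \<tau> r m"
  have "0 < 1 - 2 * m / r"
    using m_neg r_pos by (simp add: divide_neg_pos)
  then have "sqrt (1 - 2 * m / r) * s = \<tau> * A" and "0 \<le> s"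
    using assms unfolding s_def kk_def by auto
  then have "u s \<le> r + \<tau> * A"
    using u_le_linear by fastforce
  have "u s * sqrt (u s) \<le> r * sqrt r + 3/2 * sqrt (u s - 2 * m) * s"
    using u_pow32_upper[OF \<open>0 \<le> s\<close>] .
  also have "\<dots> \<le> r * sqrt r + 3/2 * sqrt (r + \<tau> * A - 2 * m) * s"
  proof -
    have "sqrt (u s - 2 * m) \<le> sqrt (r + \<tau> * A - 2 * m)"
      using \<open>u s \<le> r + \<tau> * A\<close> by simp
    from mult_right_mono[OF this \<open>0 \<le> s\<close>] show ?thesis by (simp add: mult.commute)
  qed
  also have "\<dots> < (D * A) * sqrt (D * A)"
    using upper by (simp add: s_def mult_ac)
  finally have "u s < D * A"
    by (rule pow32_less_imp_less[rotated 2]) (use u_pos[OF \<open>0 \<le> s\<close>] assms in auto)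
  then show ?thesis unfolding s_def .
qed

lemma A_o_between:
  fixes \<tau> \<alpha> \<beta> L A1 A2 :: real
  defines "k \<equiv> kk \<tau> r m" and "d \<equiv> sqrt (2 * \<beta> / \<alpha>)" and "D \<equiv> sqrt (2 * (\<beta> - (kk \<tau> r m)\<^sup>2) / \<alpha>)"
  assumes "0 < \<tau>" "0 < \<alpha>" "0 < \<beta>" "0 < A1" "A1 < L" "L < A2"
    and chord: "(d * L) * sqrt (d * L) = r * sqrt r + 3/2 * \<tau> * sqrt r * L"
    and slope: "sqrt (A1 / L) * (3/2 * \<tau> * sqrt r) < 3/2 * sqrt (-2 * m) * k"
    and "k\<^sup>2 < \<beta>"
    and upper: "r * sqrt r + 3/2 * sqrt (r + \<tau> * A2 - 2 * m) * k * A2 < (D * A2) * sqrt (D * A2)"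
  shows "A1 < A_o \<alpha> \<beta> k u \<and> A_o \<alpha> \<beta> k u \<le> A2 \<and> u (A_o \<alpha> \<beta> k u * k) = D * A_o \<alpha> \<beta> k u"
proof -
  have "0 < k"
    using assms m_neg r_pos by (simp add: k_def kk_eq)
  have "F \<alpha> \<beta> k u A < 0" if "0 < A" "A \<le> A1" for A
  proof (rule F_neg_if)
    show "sqrt (2 * \<beta> / \<alpha>) * A < u (A * k)"
      using scaled_lt_u[OF that \<open>A1 < L\<close> _ \<open>0 < k\<close> _ chord slope] assms r_pos
      unfolding d_def by simp
  qed (use assms that in auto)
  moreover have "0 < F \<alpha> \<beta> k u A2"
  proof (rule F_pos_if)
    show "u (A2 * k) < sqrt (2 * (\<beta> - k\<^sup>2) / \<alpha>) * A2"
      using u_lt_scaled[of \<tau> A2 D] upper assms unfolding k_def D_def by simp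
  qed (use assms \<open>0 < k\<close> u_pos[of "A2 * k"] in auto)
  moreover have "continuous_on {0<..} (F \<alpha> \<beta> k u)"
    using continuous_on_F[OF u_continuous \<open>0 < k\<close>] .
  ultimately have between: "A1 < A_o \<alpha> \<beta> k u \<and> A_o \<alpha> \<beta> k u \<le> A2 \<and> F \<alpha> \<beta> k u (A_o \<alpha> \<beta> k u) = 0"
    unfolding A_o_eq_least_pos_root using assms by (intro least_pos_root_between) auto
  then have "0 < A_o \<alpha> \<beta> k u"
    using \<open>0 < A1\<close> by linarith
  moreover from this have "0 \<le> u (A_o \<alpha> \<beta> k u * k)"
    using \<open>0 < k\<close> u_pos[of "A_o \<alpha> \<beta> k u * k"] by simp
  ultimately have "u (A_o \<alpha> \<beta> k u * k) = D * A_o \<alpha> \<beta> k u"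
    using F_root[OF \<open>0 < \<alpha>\<close>] between unfolding D_def k_def by (simp add: mult.commute)
  with between show ?thesis by simp
qed

end

lemma lower_bracket_eventually:
  assumes "0 < r" "0 < \<tau>" "0 \<le> A1" "A1 < L"
  shows "\<forall>\<^sub>F m in at_bot. sqrt (A1 / L) * (3/2 * \<tau> * sqrt r) < 3/2 * sqrt (-2 * m) * kk \<tau> r m"
proof -
  have "((\<lambda>m. 3/2 * (sqrt (0 - 2 * m) * kk \<tau> r m)) \<longlongrightarrow> 3/2 * (\<tau> * sqrt r)) at_bot"
    by (intro tendsto_mult_left sqrt_mult_kk_tendsto \<open>0 < r\<close>)
  moreover have "sqrt (A1 / L) * (3/2 * \<tau> * sqrt r) < 3/2 * (\<tau> * sqrt r)"
    using assms by simp
  ultimately show ?thesis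
    by (rule order_tendstoD(1)[THEN eventually_mono]) (simp add: mult.assoc)
qed

lemma upper_bracket_eventually:
  fixes r \<tau> \<alpha> \<beta> L A :: real
  defines "d \<equiv> sqrt (2 * \<beta> / \<alpha>)" and "D \<equiv> \<lambda>m. sqrt (2 * (\<beta> - (kk \<tau> r m)\<^sup>2) / \<alpha>)"
  assumes "0 < r" "0 < \<tau>" "0 < \<alpha>" "0 < \<beta>" "0 < L" "L < A"
    and chord: "(d * L) * sqrt (d * L) = r * sqrt r + 3/2 * \<tau> * sqrt r * L"
  shows "\<forall>\<^sub>F m in at_bot.
    r * sqrt r + 3/2 * sqrt (r + \<tau> * A - 2 * m) * kk \<tau> r m * A < (D m * A) * sqrt (D m * A)"
proof -
  have "((\<lambda>m. (D m * A) * sqrt (D m * A)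
      - (r * sqrt r + 3/2 * (sqrt (r + \<tau> * A - 2 * m) * kk \<tau> r m) * A))
      \<longlongrightarrow> (d * A) * sqrt (d * A) - (r * sqrt r + 3/2 * (\<tau> * sqrt r) * A)) at_bot"
    unfolding D_def d_def using assms
    by (intro tendsto_intros root_slope_tendsto sqrt_mult_kk_tendsto) auto
  moreover have "r * sqrt r + 3/2 * (\<tau> * sqrt r) * A < (d * A) * sqrt (d * A)"
    using assms chord unfolding d_def
    by (intro affine_less_pow32_scaled) (auto simp: mult.assoc)
  ultimately have "\<forall>\<^sub>F m in at_bot. 0 < (D m * A) * sqrt (D m * A)
      - (r * sqrt r + 3/2 * (sqrt (r + \<tau> * A - 2 * m) * kk \<tau> r m) * A)"
    by (intro order_tendstoD(1)) auto
  then show ?thesis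
    by (rule eventually_mono) (simp add: mult.assoc)
qed

lemma A_o_eventually_near:
  fixes r \<tau> \<alpha> \<beta> L \<delta> :: real and u :: "real \<Rightarrow> real \<Rightarrow> real"
  defines "d \<equiv> sqrt (2 * \<beta> / \<alpha>)"
  assumes "0 < r" "0 < \<tau>" "0 < \<alpha>" "0 < \<beta>" and sol: "\<forall>m<0. is_u_sol r m (u m)"
    and chord: "(d * L) * sqrt (d * L) = r * sqrt r + 3/2 * \<tau> * sqrt r * L"
    and "0 < \<delta>" "\<delta> < L"
  shows "\<forall>\<^sub>F m in at_bot. L - \<delta> < A_o \<alpha> \<beta> (kk \<tau> r m) (u m)
           \<and> A_o \<alpha> \<beta> (kk \<tau> r m) (u m) \<le> L + \<delta>
           \<and> u m (A_o \<alpha> \<beta> (kk \<tau> r m) (u m) * kk \<tau> r m)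
               = sqrt (2 * (\<beta> - (kk \<tau> r m)\<^sup>2) / \<alpha>) * A_o \<alpha> \<beta> (kk \<tau> r m) (u m)"
proof -
  have "\<forall>\<^sub>F m in at_bot. m < (0::real)"
    by simp
  moreover have "\<forall>\<^sub>F m in at_bot. sqrt ((L - \<delta>) / L) * (3/2 * \<tau> * sqrt r) < 3/2 * sqrt (-2 * m) * kk \<tau> r m"
    using assms by (intro lower_bracket_eventually) auto
  moreover have "\<forall>\<^sub>F m in at_bot. (kk \<tau> r m)\<^sup>2 < \<beta>"
    using order_tendstoD(2)[OF tendsto_power[OF kk_tendsto_0[OF \<open>0 < r\<close>, of \<tau>], of 2]] \<open>0 < \<beta>\<close> by simp
  moreover have "\<forall>\<^sub>F m in at_bot. r * sqrt r + 3/2 * sqrt (r + \<tau> * (L + \<delta>) - 2 * m) * kk \<tau> r m * (L + \<delta>)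
      < (sqrt (2 * (\<beta> - (kk \<tau> r m)\<^sup>2) / \<alpha>) * (L + \<delta>)) * sqrt (sqrt (2 * (\<beta> - (kk \<tau> r m)\<^sup>2) / \<alpha>) * (L + \<delta>))"
    using assms by (intro upper_bracket_eventually[unfolded d_def]) auto
  ultimately show ?thesis
  proof eventually_elim
    case (elim m)
    interpret u_solution r m "u m"
      using sol elim(1) \<open>0 < r\<close> by unfold_locales auto
    from A_o_between[OF \<open>0 < \<tau>\<close> \<open>0 < \<alpha>\<close> \<open>0 < \<beta>\<close> _ _ _ chord[unfolded d_def] elim(2-4)]
    show ?case
      using \<open>0 < \<delta>\<close> \<open>\<delta> < L\<close> by simp
  qed
qed

lemma A_o_tendsto:
  fixes r \<tau> \<alpha> \<beta> L :: real and u :: "real \<Rightarrow> real \<Rightarrow> real"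
  defines "d \<equiv> sqrt (2 * \<beta> / \<alpha>)"
  assumes "0 < r" "0 < \<tau>" "0 < \<alpha>" "0 < \<beta>" and sol: "\<forall>m<0. is_u_sol r m (u m)"
    and "0 < L" and chord: "(d * L) * sqrt (d * L) = r * sqrt r + 3/2 * \<tau> * sqrt r * L"
  shows "((\<lambda>m. A_o \<alpha> \<beta> (kk \<tau> r m) (u m)) \<longlongrightarrow> L) at_bot"
    and "((\<lambda>m. u m (A_o \<alpha> \<beta> (kk \<tau> r m) (u m) * kk \<tau> r m)) \<longlongrightarrow> d * L) at_bot"
proof -
  define Ao where "Ao = (\<lambda>m. A_o \<alpha> \<beta> (kk \<tau> r m) (u m))"
  define D where "D = (\<lambda>m. sqrt (2 * (\<beta> - (kk \<tau> r m)\<^sup>2) / \<alpha>))"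
  note near = A_o_eventually_near[OF assms(2-5) sol chord[unfolded d_def]]
  show Ao_lim: "(Ao \<longlongrightarrow> L) at_bot"
  proof (rule tendstoI)
    fix e :: real assume "0 < e"
    then have "0 < min (e/2) (L/2)" "min (e/2) (L/2) < L"
      using \<open>0 < L\<close> by auto
    from near[OF this] show "\<forall>\<^sub>F m in at_bot. dist (Ao m) L < e"
      by eventually_elim (use \<open>0 < e\<close> in \<open>auto simp: dist_real_def Ao_def\<close>)
  qed
  have "((\<lambda>m. D m * Ao m) \<longlongrightarrow> d * L) at_bot"
    unfolding D_def d_def using \<open>0 < \<alpha>\<close> by (intro tendsto_mult root_slope_tendsto Ao_lim \<open>0 < r\<close>) auto
  moreover have "\<forall>\<^sub>F m in at_bot. D m * Ao m = u m (Ao m * kk \<tau> r m)"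
    using near[of "L/2"] \<open>0 < L\<close> by (auto simp: Ao_def D_def elim: eventually_mono)
  ultimately show "((\<lambda>m. u m (Ao m * kk \<tau> r m)) \<longlongrightarrow> d * L) at_bot"
    by (rule Lim_transform_eventually)
qed

lemma chord_equation_of_cubic_root:
  fixes r \<tau> \<alpha> \<beta> \<theta> :: real
  defines "L \<equiv> r * \<theta>\<^sup>2 * sqrt (\<alpha> / (2 * \<beta>))" and "d \<equiv> sqrt (2 * \<beta> / \<alpha>)"
  assumes "0 < r" "0 < \<alpha>" "0 < \<beta>" "0 < \<theta>"
    and cubic: "\<theta> ^ 3 - 3 * \<tau> / 2 * sqrt (\<alpha> / (2 * \<beta>)) * \<theta>\<^sup>2 - 1 = 0"
  shows "d * L = r * \<theta>\<^sup>2"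
    and "(d * L) * sqrt (d * L) = r * sqrt r + 3/2 * \<tau> * sqrt r * L"
proof -
  have "d * sqrt (\<alpha> / (2 * \<beta>)) = 1"
    using assms unfolding d_def by (simp add: real_sqrt_mult[symmetric])
  then show dL: "d * L = r * \<theta>\<^sup>2"
    unfolding L_def by (metis mult.commute mult.left_commute mult.right_neutral)
  have "sqrt (d * L) = sqrt r * \<theta>"
    using dL \<open>0 < \<theta>\<close> by (simp add: real_sqrt_mult)
  then have "(d * L) * sqrt (d * L) = r * sqrt r * \<theta> ^ 3"
    using dL by (simp add: power2_eq_square power3_eq_cube)
  also have "\<dots> = r * sqrt r * (1 + 3 * \<tau> / 2 * sqrt (\<alpha> / (2 * \<beta>)) * \<theta>\<^sup>2)"
    using cubic by (simp add: algebra_simps)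
  also have "\<dots> = r * sqrt r + 3/2 * \<tau> * sqrt r * L"
    unfolding L_def by (simp add: algebra_simps)
  finally show "(d * L) * sqrt (d * L) = r * sqrt r + 3/2 * \<tau> * sqrt r * L" .
qed

theorem mainTheorem7:
  fixes r \<tau> \<alpha> \<beta> :: real and u :: "real \<Rightarrow> real \<Rightarrow> real"
  assumes "r > 0" "\<tau> > 0" "\<alpha> > 0" "0 < \<beta>" "\<beta> \<le> 1"
    and "\<forall>m<0. is_u_sol r m (u m)"
  shows "((\<lambda>m. A_o \<alpha> \<beta> (kk \<tau> r m) (u m))
            \<longlongrightarrow> r * (theta \<tau> \<alpha> \<beta>)\<^sup>2 * sqrt (\<alpha> / (2 * \<beta>))) at_bot \<and>
         ((\<lambda>m. u m (A_o \<alpha> \<beta> (kk \<tau> r m) (u m) * kk \<tau> r m))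
            \<longlongrightarrow> r * (theta \<tau> \<alpha> \<beta>)\<^sup>2) at_bot"
proof -
  define \<theta> where "\<theta> = theta \<tau> \<alpha> \<beta>"
  have "0 < \<theta> \<and> \<theta> ^ 3 - 3 * \<tau> / 2 * sqrt (\<alpha> / (2 * \<beta>)) * \<theta>\<^sup>2 - 1 = 0"
    unfolding \<theta>_def theta_def
    by (rule theI'[OF cubic_pos_root_unique]) (use assms in simp)
  then have "0 < \<theta>" and cubic: "\<theta> ^ 3 - 3 * \<tau> / 2 * sqrt (\<alpha> / (2 * \<beta>)) * \<theta>\<^sup>2 - 1 = 0"
    by auto
  note chord = chord_equation_of_cubic_root[OF assms(1,3,4) \<open>0 < \<theta>\<close> cubic]
  have "0 < r * \<theta>\<^sup>2 * sqrt (\<alpha> / (2 * \<beta>))"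
    using assms \<open>0 < \<theta>\<close> by simp
  from A_o_tendsto[OF assms(1-4,6) this chord(2)] chord(1) show ?thesis
    unfolding \<theta>_def by simp
qed

end
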